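(* Let $p_1,\dots,p_k$ be mutually orthogonal primitive idempotents in a finite-dimensional formally real Jordan algebra $A$ with unit $u$. Then the restriction of $\exp_u\colon(A,\|\cdot\|_u)\to(A_+^\circ,d_T)$, $x\mapsto e^x$, to $\mathrm{Span}\{p_1,\dots,p_k\}$ is an isometry. Moreover, if $x,w\in\mathrm{Span}\{p_1,\dots,p_k\}$ with $\|w\|_u=1$, then $t\mapsto e^{tw+x}$, $t\in\mathbb{R}$, is a geodesic path in $(A_+^\circ,d_T)$, i.e. $d_T(e^{tw+x},e^{sw+x})=|t-s|$ for all $s,t\in\mathbb{R}$.
   Context: $A$: finite-dimensional real vector space with commutative bilinear product $\bullet$ satisfying $x^2\bullet(x\bullet y)=x\bullet(x^2\bullet y)$, formally real, with unit $u$. $A_+=\{x^2\}$, $A_+^\circ$ its interior, $x\le y$ iff $y-x\in A_+$. Idempotents $p,q$ are orthogonal if $p\bullet q=0$; spectral decomposition $x=\sum_i\lambda_ip_i$ over a Jordan frame, $\sigma(x)=\{\lambda_i\}$, $e^x=\sum_ie^{\lambda_i}p_i$. $\|x\|_u=\max\{|\lambda|:\lambda\in\sigma(x)\}$. For $x\in A$, $y\in A_+^\circ$, $M(x/y)=\inf\{\beta:x\le\beta y\}$; $d_T(x,y)=\max\{\log M(x/y),\log M(y/x)\}$ for $x,y\in A_+^\circ$ (equivalently $d_T(x,y)=\|\log U_{y^{-1/2}}x\|_u$, with $U_zv=2z\bullet(z\bullet v)-z^2\bullet v$). *)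

theory Defs
  imports "HOL-Analysis.Analysis"
begin

definition jsq :: "('a \<Rightarrow> 'a \<Rightarrow> 'a) \<Rightarrow> 'a \<Rightarrow> 'a" where
  "jsq jm x = jm x x"

definition EJA :: "('a::euclidean_space \<Rightarrow> 'a \<Rightarrow> 'a) \<Rightarrow> 'a \<Rightarrow> bool" where
  "EJA jm u \<longleftrightarrow>
     bilinear jm
   \<and> (\<forall>x y. jm x y = jm y x)
   \<and> (\<forall>x y. jm (jsq jm x) (jm x y) = jm x (jm (jsq jm x) y))
   \<and> (\<forall>(n::nat) (x::nat \<Rightarrow> 'a). (\<Sum>i<n. jsq jm (x i)) = 0 \<longrightarrow> (\<forall>i<n. x i = 0))
   \<and> (\<forall>x. jm u x = x)"

definition idempotent :: "('a::real_vector \<Rightarrow> 'a \<Rightarrow> 'a) \<Rightarrow> 'a \<Rightarrow> bool" where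
  "idempotent jm p \<longleftrightarrow> jm p p = p"

definition primitive_idem :: "('a::real_vector \<Rightarrow> 'a \<Rightarrow> 'a) \<Rightarrow> 'a \<Rightarrow> bool" where
  "primitive_idem jm p \<longleftrightarrow> idempotent jm p \<and> p \<noteq> 0 \<and>
     \<not> (\<exists>q r. idempotent jm q \<and> idempotent jm r \<and> q \<noteq> 0 \<and> r \<noteq> 0
              \<and> jm q r = 0 \<and> p = q + r)"

definition jordan_frame :: "('a::real_vector \<Rightarrow> 'a \<Rightarrow> 'a) \<Rightarrow> 'a \<Rightarrow> nat \<Rightarrow> (nat \<Rightarrow> 'a) \<Rightarrow> bool" where
  "jordan_frame jm u n c \<longleftrightarrow>
     (\<forall>i<n. primitive_idem jm (c i))
   \<and> (\<forall>i<n. \<forall>j<n. i \<noteq> j \<longrightarrow> jm (c i) (c j) = 0)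
   \<and> (\<Sum>i<n. c i) = u"

definition jspec :: "('a::real_vector \<Rightarrow> 'a \<Rightarrow> 'a) \<Rightarrow> 'a \<Rightarrow> 'a \<Rightarrow> real set" where
  "jspec jm u x = {\<mu>. \<exists>n c l. jordan_frame jm u n c \<and> x = (\<Sum>i<n. l i *\<^sub>R c i)
                              \<and> (\<exists>i<n. l i = \<mu>)}"

definition unorm :: "('a::real_vector \<Rightarrow> 'a \<Rightarrow> 'a) \<Rightarrow> 'a \<Rightarrow> 'a \<Rightarrow> real" where
  "unorm jm u x = Max (abs ` jspec jm u x)"

definition jexp :: "('a::real_vector \<Rightarrow> 'a \<Rightarrow> 'a) \<Rightarrow> 'a \<Rightarrow> 'a \<Rightarrow> 'a" where
  "jexp jm u x = (THE y. \<exists>n c l. jordan_frame jm u n c \<and> x = (\<Sum>i<n. l i *\<^sub>R c i)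
                              \<and> y = (\<Sum>i<n. exp (l i) *\<^sub>R c i))"

definition jcone :: "('a \<Rightarrow> 'a \<Rightarrow> 'a) \<Rightarrow> 'a set" where
  "jcone jm = {jsq jm z | z. True}"

definition jle :: "('a::real_vector \<Rightarrow> 'a \<Rightarrow> 'a) \<Rightarrow> 'a \<Rightarrow> 'a \<Rightarrow> bool" where
  "jle jm x y \<longleftrightarrow> y - x \<in> jcone jm"

definition Mfun :: "('a::real_vector \<Rightarrow> 'a \<Rightarrow> 'a) \<Rightarrow> 'a \<Rightarrow> 'a \<Rightarrow> real" where
  "Mfun jm x y = Inf {\<beta>. jle jm x (\<beta> *\<^sub>R y)}"

definition dT :: "('a::real_vector \<Rightarrow> 'a \<Rightarrow> 'a) \<Rightarrow> 'a \<Rightarrow> 'a \<Rightarrow> real" where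
  "dT jm x y = max (ln (Mfun jm x y)) (ln (Mfun jm y x))"

end

theory Submission
  imports Defs
begin

text \<open>Extend p_1, ..., p_k to a Jordan frame c_1, ..., c_n: split u - sum_i p_i into a maximal
  family of nonzero orthogonal idempotents (they are linearly independent, so their number is
  bounded by dim A); maximality makes them primitive, and Peirce orthogonality keeps them
  orthogonal to the p_i. On span {c_i} everything is computed coordinatewise: e^x has coordinates
  e^(a_i), sigma(x) = {a_i}, and sum_i r_i c_i is a square iff all r_i >= 0. Hence
  M(e^x/e^y) = max_i e^(a_i - b_i), so d_T(e^x, e^y) = max_i |a_i - b_i| = ||x - y||_u, and the
  geodesic property follows by homogeneity of the norm.

  That e^x and sigma(x) do not depend on the frame holds because spectral projections are
  Lagrange polynomials in x. That a square z^2 has nonnegative coordinates uses that the powers of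
  z span an associative subalgebra, in which a negative coordinate would produce a vanishing sum
  of two squares with a nonzero summand.\<close>

lemma sum_scaleR_group_by_value:
  fixes c :: "nat \<Rightarrow> 'a::real_vector"
  assumes "finite S" and "\<forall>i<n. l i \<in> S"
  shows "(\<Sum>i<n. g (l i) *\<^sub>R c i) = (\<Sum>m\<in>S. g m *\<^sub>R (\<Sum>i<n. of_bool (l i = m) *\<^sub>R c i))"
proof -
  have "(\<Sum>m\<in>S. g m *\<^sub>R (\<Sum>i<n. of_bool (l i = m) *\<^sub>R c i))
      = (\<Sum>i<n. \<Sum>m\<in>S. if l i = m then g (l i) *\<^sub>R c i else 0)"
    by (subst sum.swap) (auto simp: scaleR_sum_right intro!: sum.cong)
  also have "\<dots> = (\<Sum>i<n. g (l i) *\<^sub>R c i)"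
    using assms by (simp add: sum.delta)
  finally show ?thesis ..
qed

lemma Max_abs_eq_max_Max:
  fixes f :: "'b \<Rightarrow> real"
  assumes "finite I" and "I \<noteq> {}"
  shows "Max ((\<lambda>i. \<bar>f i\<bar>) ` I) = max (Max (f ` I)) (Max ((\<lambda>i. - f i) ` I))"
proof (rule antisym)
  have "f i \<le> Max (f ` I)" "- f i \<le> Max ((\<lambda>i. - f i) ` I)" if "i \<in> I" for i
    using assms that by auto
  then have "\<bar>f i\<bar> \<le> max (Max (f ` I)) (Max ((\<lambda>i. - f i) ` I))" if "i \<in> I" for i
    using that by fastforce
  then show "Max ((\<lambda>i. \<bar>f i\<bar>) ` I) \<le> max (Max (f ` I)) (Max ((\<lambda>i. - f i) ` I))"
    using assms by simp
  have "\<bar>f i\<bar> \<le> Max ((\<lambda>i. \<bar>f i\<bar>) ` I)" if "i \<in> I" for i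
    using assms that by auto
  then show "max (Max (f ` I)) (Max ((\<lambda>i. - f i) ` I)) \<le> Max ((\<lambda>i. \<bar>f i\<bar>) ` I)"
    using assms by (auto simp: abs_le_iff)
qed

lemma span_image_lessThan:
  fixes c :: "nat \<Rightarrow> 'a::real_vector"
  shows "x \<in> span (c ` {..<n}) \<longleftrightarrow> (\<exists>a. x = (\<Sum>i<n. a i *\<^sub>R c i))"
proof
  assume "x \<in> span (c ` {..<n})"
  then show "\<exists>a. x = (\<Sum>i<n. a i *\<^sub>R c i)"
  proof (induction x rule: span_induct_alt)
    case base
    show ?case by (rule exI[of _ "\<lambda>_. 0"]) simp
  next
    case (step r y x)
    then obtain a j where "x = (\<Sum>i<n. a i *\<^sub>R c i)" "j < n" "y = c j"
      by auto
    then have "r *\<^sub>R y + x = (\<Sum>i<n. (a i + (if i = j then r else 0)) *\<^sub>R c i)"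
      by (simp add: scaleR_add_left sum.distrib if_distrib[of "\<lambda>t. t *\<^sub>R _"] sum.delta cong: if_cong)
    then show ?case by (rule exI[where x = "\<lambda>i. a i + (if i = j then r else 0)"])
  qed
qed (auto intro: span_sum span_scale span_base)

section \<open>Functional calculus on orthogonal idempotents\<close>

definition idempotent_decomposition ::
    "('a::real_vector \<Rightarrow> 'a \<Rightarrow> 'a) \<Rightarrow> 'a \<Rightarrow> nat \<Rightarrow> (nat \<Rightarrow> 'a) \<Rightarrow> bool" where
  "idempotent_decomposition jm q n c \<longleftrightarrow>
     (\<forall>i<n. idempotent jm (c i)) \<and> (\<forall>i<n. \<forall>j<n. i \<noteq> j \<longrightarrow> jm (c i) (c j) = 0)
   \<and> (\<Sum>i<n. c i) = q"

lemma jordan_frame_iff: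
  "jordan_frame jm u n c \<longleftrightarrow> idempotent_decomposition jm u n c \<and> (\<forall>i<n. primitive_idem jm (c i))"
  by (auto simp: jordan_frame_def idempotent_decomposition_def primitive_idem_def)

lemma jordan_frame_imp_idempotent_decomposition:
  "jordan_frame jm u n c \<Longrightarrow> idempotent_decomposition jm u n c"
  by (simp add: jordan_frame_iff)

lemma jordan_frame_nonzero: "jordan_frame jm u n c \<Longrightarrow> i < n \<Longrightarrow> c i \<noteq> 0"
  by (simp add: jordan_frame_def primitive_idem_def)

text \<open>Spectral projections are Lagrange polynomials in x, hence independent of the chosen
  decomposition of x; this is what makes jexp and jspec well defined. Evaluating the polynomial
  by repeated multiplication by x needs no associativity.\<close>

primrec lagrange :: "real \<Rightarrow> real list \<Rightarrow> real \<Rightarrow> real" where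
  "lagrange m [] t = 1"
| "lagrange m (l # ls) t = (t - l) / (m - l) * lagrange m ls t"

primrec lagrange_elem :: "('a::real_vector \<Rightarrow> 'a \<Rightarrow> 'a) \<Rightarrow> 'a \<Rightarrow> real \<Rightarrow> real list \<Rightarrow> 'a \<Rightarrow> 'a" where
  "lagrange_elem jm u m [] x = u"
| "lagrange_elem jm u m (l # ls) x =
     (1 / (m - l)) *\<^sub>R (jm x (lagrange_elem jm u m ls x) - l *\<^sub>R lagrange_elem jm u m ls x)"

lemma lagrange_eq_0: "t \<in> set ls \<Longrightarrow> lagrange m ls t = 0"
  by (induction ls) auto

lemma lagrange_self: "m \<notin> set ls \<Longrightarrow> lagrange m ls m = 1"
  by (induction ls) auto

locale bilinear_product =
  fixes jm :: "'a::real_vector \<Rightarrow> 'a \<Rightarrow> 'a"  (infixl "\<cdot>" 70)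
  assumes bilinear_jm: "bilinear jm"
begin

lemmas mult_simps [simp] =
  bilinear_ladd[OF bilinear_jm] bilinear_radd[OF bilinear_jm]
  bilinear_lmul[OF bilinear_jm] bilinear_rmul[OF bilinear_jm]
  bilinear_lneg[OF bilinear_jm] bilinear_rneg[OF bilinear_jm]
  bilinear_lsub[OF bilinear_jm] bilinear_rsub[OF bilinear_jm]
  bilinear_lzero[OF bilinear_jm] bilinear_rzero[OF bilinear_jm]

lemma mult_sum_left: "sum f S \<cdot> x = (\<Sum>i\<in>S. f i \<cdot> x)"
  using bilinear_jm linear_sum[of "\<lambda>y. y \<cdot> x"] by (simp add: bilinear_def o_def)

lemma mult_sum_right: "x \<cdot> sum f S = (\<Sum>i\<in>S. x \<cdot> f i)"
  using bilinear_jm linear_sum[of "\<lambda>y. x \<cdot> y"] by (simp add: bilinear_def o_def)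

lemma mult_mem_span:
  assumes "x \<in> span S" and "y \<in> span T" and "\<And>a b. a \<in> S \<Longrightarrow> b \<in> T \<Longrightarrow> a \<cdot> b \<in> span U"
  shows "x \<cdot> y \<in> span U"
proof -
  have left: "a \<cdot> y \<in> span U" if "a \<in> S" for a
    using assms(2)
    by (induction rule: span_induct) (auto simp: subspace_def span_add span_scale span_zero assms(3) that)
  from assms(1) show ?thesis
    by (induction rule: span_induct) (auto simp: subspace_def span_add span_scale span_zero left)
qed

lemma mult_assoc_on_span:
  assumes "x \<in> span S" and "y \<in> span S" and "w \<in> span S"
    and "\<And>a b c. a \<in> S \<Longrightarrow> b \<in> S \<Longrightarrow> c \<in> S \<Longrightarrow> (a \<cdot> b) \<cdot> c = a \<cdot> (b \<cdot> c)"
  shows "(x \<cdot> y) \<cdot> w = x \<cdot> (y \<cdot> w)"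
proof -
  have basis2: "(a \<cdot> b) \<cdot> w = a \<cdot> (b \<cdot> w)" if "a \<in> S" "b \<in> S" for a b
    using assms(3) by (induction rule: span_induct) (auto simp: subspace_def assms(4) that)
  have basis1: "(a \<cdot> y) \<cdot> w = a \<cdot> (y \<cdot> w)" if "a \<in> S" for a
    using assms(2) by (induction rule: span_induct) (auto simp: subspace_def basis2 that)
  from assms(1) show ?thesis
    by (induction rule: span_induct) (auto simp: subspace_def basis1)
qed

lemma idempotent_decomposition_mult_right:
  assumes "idempotent_decomposition jm q n c" and "j < n"
  shows "c j \<cdot> (\<Sum>i<n. b i *\<^sub>R c i) = b j *\<^sub>R c j"
proof -
  have "c j \<cdot> (\<Sum>i<n. b i *\<^sub>R c i) = (\<Sum>i<n. if i = j then b j *\<^sub>R c j else 0)"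
    unfolding mult_sum_right using assms
    by (intro sum.cong) (auto simp: idempotent_decomposition_def idempotent_def)
  also have "\<dots> = b j *\<^sub>R c j"
    using assms(2) by (simp add: sum.delta)
  finally show ?thesis .
qed

lemma idempotent_decomposition_mult:
  assumes "idempotent_decomposition jm q n c"
  shows "(\<Sum>i<n. a i *\<^sub>R c i) \<cdot> (\<Sum>i<n. b i *\<^sub>R c i) = (\<Sum>i<n. (a i * b i) *\<^sub>R c i)"
  unfolding mult_sum_left using idempotent_decomposition_mult_right[OF assms]
  by (intro sum.cong) auto

lemma lagrange_elem_decomposition:
  assumes "idempotent_decomposition jm u n c"
  shows "lagrange_elem jm u m ls (\<Sum>i<n. l i *\<^sub>R c i) = (\<Sum>i<n. lagrange m ls (l i) *\<^sub>R c i)"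
proof (induction ls)
  case Nil
  then show ?case
    using assms by (simp add: idempotent_decomposition_def)
next
  case (Cons a ls)
  have "lagrange_elem jm u m (a # ls) (\<Sum>i<n. l i *\<^sub>R c i)
      = (1 / (m - a)) *\<^sub>R ((\<Sum>i<n. (l i * lagrange m ls (l i)) *\<^sub>R c i)
                           - a *\<^sub>R (\<Sum>i<n. lagrange m ls (l i) *\<^sub>R c i))"
    using Cons idempotent_decomposition_mult[OF assms] by simp
  also have "\<dots> = (\<Sum>i<n. ((l i * lagrange m ls (l i) - a * lagrange m ls (l i)) / (m - a)) *\<^sub>R c i)"
    by (simp add: scaleR_sum_right scaleR_diff_left scaleR_diff_right sum_subtractf diff_divide_distrib)
  also have "\<dots> = (\<Sum>i<n. lagrange m (a # ls) (l i) *\<^sub>R c i)"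
    by (simp add: algebra_simps)
  finally show ?case .
qed

lemma spectral_projection_eq_lagrange_elem:
  assumes "idempotent_decomposition jm u n c" and "l ` {..<n} - {m} \<subseteq> set ls" and "m \<notin> set ls"
  shows "lagrange_elem jm u m ls (\<Sum>i<n. l i *\<^sub>R c i) = (\<Sum>i<n. of_bool (l i = m) *\<^sub>R c i)"
  unfolding lagrange_elem_decomposition[OF assms(1)] using assms(2,3)
  by (intro sum.cong) (auto simp: lagrange_eq_0 lagrange_self)

lemma spectral_projection_unique:
  assumes "idempotent_decomposition jm u n c" and "idempotent_decomposition jm u n' c'"
    and "(\<Sum>i<n. l i *\<^sub>R c i) = (\<Sum>i<n'. l' i *\<^sub>R c' i)"
  shows "(\<Sum>i<n. of_bool (l i = m) *\<^sub>R c i) = (\<Sum>i<n'. of_bool (l' i = m) *\<^sub>R c' i)"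
proof -
  define ls where "ls = sorted_list_of_set (l ` {..<n} \<union> l' ` {..<n'} - {m})"
  have "set ls = l ` {..<n} \<union> l' ` {..<n'} - {m}"
    by (simp add: ls_def)
  then have "lagrange_elem jm u m ls (\<Sum>i<n. l i *\<^sub>R c i) = (\<Sum>i<n. of_bool (l i = m) *\<^sub>R c i)"
    and "lagrange_elem jm u m ls (\<Sum>i<n'. l' i *\<^sub>R c' i) = (\<Sum>i<n'. of_bool (l' i = m) *\<^sub>R c' i)"
    by (auto intro!: spectral_projection_eq_lagrange_elem assms(1,2))
  then show ?thesis
    using assms(3) by simp
qed

lemma spectral_function_unique:
  assumes "idempotent_decomposition jm u n c" and "idempotent_decomposition jm u n' c'"
    and "(\<Sum>i<n. l i *\<^sub>R c i) = (\<Sum>i<n'. l' i *\<^sub>R c' i)"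
  shows "(\<Sum>i<n. g (l i) *\<^sub>R c i) = (\<Sum>i<n'. g (l' i) *\<^sub>R c' i)"
proof -
  define S where "S = l ` {..<n} \<union> l' ` {..<n'}"
  have "(\<Sum>i<n. g (l i) *\<^sub>R c i) = (\<Sum>m\<in>S. g m *\<^sub>R (\<Sum>i<n. of_bool (l i = m) *\<^sub>R c i))"
    by (rule sum_scaleR_group_by_value) (auto simp: S_def)
  also have "\<dots> = (\<Sum>m\<in>S. g m *\<^sub>R (\<Sum>i<n'. of_bool (l' i = m) *\<^sub>R c' i))"
    using spectral_projection_unique[OF assms] by simp
  also have "\<dots> = (\<Sum>i<n'. g (l' i) *\<^sub>R c' i)"
    by (rule sum_scaleR_group_by_value[symmetric]) (auto simp: S_def)
  finally show ?thesis .
qed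

lemma jexp_jordan_frame:
  assumes "jordan_frame jm u n c"
  shows "jexp jm u (\<Sum>i<n. l i *\<^sub>R c i) = (\<Sum>i<n. exp (l i) *\<^sub>R c i)"
  unfolding jexp_def
proof (rule the_equality)
  fix y
  assume "\<exists>n' c' l'. jordan_frame jm u n' c' \<and> (\<Sum>i<n. l i *\<^sub>R c i) = (\<Sum>i<n'. l' i *\<^sub>R c' i)
            \<and> y = (\<Sum>i<n'. exp (l' i) *\<^sub>R c' i)"
  then obtain n' c' l' where frame': "jordan_frame jm u n' c'"
    and eq: "(\<Sum>i<n. l i *\<^sub>R c i) = (\<Sum>i<n'. l' i *\<^sub>R c' i)"
    and y: "y = (\<Sum>i<n'. exp (l' i) *\<^sub>R c' i)"
    by blast
  note decomp = jordan_frame_imp_idempotent_decomposition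
  show "y = (\<Sum>i<n. exp (l i) *\<^sub>R c i)"
    unfolding y using spectral_function_unique[OF decomp[OF assms] decomp[OF frame'] eq] by simp
qed (use assms in blast)

lemma jspec_jordan_frame:
  assumes "jordan_frame jm u n c"
  shows "jspec jm u (\<Sum>i<n. l i *\<^sub>R c i) = l ` {..<n}"
proof
  show "l ` {..<n} \<subseteq> jspec jm u (\<Sum>i<n. l i *\<^sub>R c i)"
    using assms unfolding jspec_def by blast
  show "jspec jm u (\<Sum>i<n. l i *\<^sub>R c i) \<subseteq> l ` {..<n}"
  proof
    fix m
    assume "m \<in> jspec jm u (\<Sum>i<n. l i *\<^sub>R c i)"
    then obtain n' c' l' j where frame': "jordan_frame jm u n' c'"
      and eq: "(\<Sum>i<n. l i *\<^sub>R c i) = (\<Sum>i<n'. l' i *\<^sub>R c' i)" and j: "j < n'" "l' j = m"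
      unfolding jspec_def by blast
    note decomp = jordan_frame_imp_idempotent_decomposition
    show "m \<in> l ` {..<n}"
    proof (rule ccontr)
      assume "m \<notin> l ` {..<n}"
      then have "(\<Sum>i<n. of_bool (l i = m) *\<^sub>R c i) = 0"
        by (intro sum.neutral) auto
      then have "(\<Sum>i<n'. of_bool (l' i = m) *\<^sub>R c' i) = 0"
        using spectral_projection_unique[OF decomp[OF assms] decomp[OF frame'] eq, of m] by simp
      then have "c' j = 0"
        using idempotent_decomposition_mult_right[OF decomp[OF frame'] j(1), of "\<lambda>i. of_bool (l' i = m)"] j(2)
        by simp
      then show False
        using jordan_frame_nonzero[OF frame' j(1)] by contradiction
    qed
  qed
qed

lemma unorm_jordan_frame:
  "jordan_frame jm u n c \<Longrightarrow> unorm jm u (\<Sum>i<n. l i *\<^sub>R c i) = Max ((\<lambda>i. \<bar>l i\<bar>) ` {..<n})"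
  by (simp add: unorm_def jspec_jordan_frame image_image)

end

primrec jpow :: "('a::real_vector \<Rightarrow> 'a \<Rightarrow> 'a) \<Rightarrow> 'a \<Rightarrow> 'a \<Rightarrow> nat \<Rightarrow> 'a" where
  "jpow jm u z 0 = u"
| "jpow jm u z (Suc n) = jm z (jpow jm u z n)"

locale eja =
  fixes jm :: "'a::euclidean_space \<Rightarrow> 'a \<Rightarrow> 'a"  (infixl "\<cdot>" 70) and u :: 'a
  assumes EJA: "EJA jm u"
begin

sublocale bilinear_product jm
  using EJA by unfold_locales (simp add: EJA_def)

lemma mult_commute: "x \<cdot> y = y \<cdot> x"
  using EJA by (simp add: EJA_def)

lemma jordan_identity: "(x \<cdot> x) \<cdot> (x \<cdot> y) = x \<cdot> ((x \<cdot> x) \<cdot> y)"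
  using EJA by (simp add: EJA_def jsq_def)

lemma mult_unit_left [simp]: "u \<cdot> x = x"
  using EJA by (simp add: EJA_def)

lemma mult_unit_right [simp]: "x \<cdot> u = x"
  using mult_commute by simp

lemma unit_nonzero: "u \<noteq> 0"
proof
  assume "u = 0"
  then have "x = 0" for x :: 'a
    using mult_unit_left[of x] by simp
  then show False
    using nonzero_Basis SOME_Basis by blast
qed

lemma square_add_square_eq_0D:
  assumes "y \<cdot> y + w \<cdot> w = 0"
  shows "w = 0"
proof -
  define x where "x i = (if i = 0 then y else w)" for i :: nat
  have "(\<Sum>i<2. jsq jm (x i)) = 0"
    using assms by (simp add: x_def jsq_def numeral_2_eq_2)
  then have "\<forall>i<2. x i = 0"
    using EJA unfolding EJA_def by blast
  then show ?thesis
    by (auto simp: x_def dest: spec[of _ 1])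
qed

text \<open>The Jordan identity is cubic in x; the alternating sum of its instances at a + b + c,
  a + b, a + c, b + c, a, b, c isolates the fully polarised part.\<close>

lemma jordan_identity_linearized:
  "(a \<cdot> b) \<cdot> (c \<cdot> w) + (b \<cdot> c) \<cdot> (a \<cdot> w) + (c \<cdot> a) \<cdot> (b \<cdot> w)
   = c \<cdot> ((a \<cdot> b) \<cdot> w) + a \<cdot> ((b \<cdot> c) \<cdot> w) + b \<cdot> ((c \<cdot> a) \<cdot> w)"
proof -
  define T where "T x = (x \<cdot> x) \<cdot> (x \<cdot> w) - x \<cdot> ((x \<cdot> x) \<cdot> w)" for x
  have "T x = 0" for x
    unfolding T_def using jordan_identity by simp
  then have "T (a + b + c) - T (a + b) - T (a + c) - T (b + c) + T a + T b + T c = 0"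
    by simp
  then have "2 *\<^sub>R ((a \<cdot> b) \<cdot> (c \<cdot> w) + (b \<cdot> c) \<cdot> (a \<cdot> w) + (c \<cdot> a) \<cdot> (b \<cdot> w)
      - (c \<cdot> ((a \<cdot> b) \<cdot> w) + a \<cdot> ((b \<cdot> c) \<cdot> w) + b \<cdot> ((c \<cdot> a) \<cdot> w))) = 0"
    unfolding T_def
    by (simp add: algebra_simps mult_commute[of b a] mult_commute[of c a] mult_commute[of c b] scaleR_2)
  then show ?thesis
    by simp
qed

lemma mult_orthogonal_idempotent_eq_0:
  assumes "e \<cdot> e = e" and "f \<cdot> f = f" and "e \<cdot> f = 0" and "e \<cdot> a = a"
  shows "f \<cdot> a = 0"
proof -
  have fe: "f \<cdot> e = 0"
    using assms(3) mult_commute by metis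
  have commute: "e \<cdot> (f \<cdot> t) = f \<cdot> (e \<cdot> t)" for t
    using jordan_identity_linearized[of e e f t] by (simp add: assms(1,3) fe)
  have peirce: "(f \<cdot> t) \<cdot> e = e \<cdot> ((f \<cdot> t) \<cdot> e) + f \<cdot> ((t \<cdot> e) \<cdot> e)" for t
    using jordan_identity_linearized[of e f t e] by (simp add: assms(1,3) fe)
  have ae: "a \<cdot> e = a"
    using assms(4) mult_commute by metis
  have fae: "(f \<cdot> a) \<cdot> e = f \<cdot> a"
    using commute[of a] assms(4) mult_commute by metis
  then have "e \<cdot> ((f \<cdot> a) \<cdot> e) = f \<cdot> a"
    using commute[of a] assms(4) by simp
  then have "f \<cdot> a = f \<cdot> a + f \<cdot> a"
    using peirce[of a] fae ae by simp
  then show ?thesis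
    by simp
qed

section \<open>Power associativity\<close>

abbreviation jordan_pow :: "'a \<Rightarrow> nat \<Rightarrow> 'a"  (infixr "^\<^sub>J" 80) where
  "z ^\<^sub>J n \<equiv> jpow jm u z n"

abbreviation power_span :: "'a \<Rightarrow> 'a set" where
  "power_span z \<equiv> span (range (jpow jm u z))"

lemma jpow_Suc_Suc_mult:
  "z ^\<^sub>J Suc (Suc n) \<cdot> t = 2 *\<^sub>R (z ^\<^sub>J Suc n \<cdot> (z \<cdot> t)) + (z \<cdot> z) \<cdot> (z ^\<^sub>J n \<cdot> t)
     - z ^\<^sub>J n \<cdot> (z \<cdot> (z \<cdot> t)) - z \<cdot> (z \<cdot> (z ^\<^sub>J n \<cdot> t))"
proof -
  have "(z ^\<^sub>J n \<cdot> z) \<cdot> (t \<cdot> z) + (z \<cdot> t) \<cdot> (z ^\<^sub>J n \<cdot> z) + (t \<cdot> z ^\<^sub>J n) \<cdot> (z \<cdot> z)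
      = t \<cdot> ((z ^\<^sub>J n \<cdot> z) \<cdot> z) + z ^\<^sub>J n \<cdot> ((z \<cdot> t) \<cdot> z) + z \<cdot> ((t \<cdot> z ^\<^sub>J n) \<cdot> z)"
    by (rule jordan_identity_linearized)
  then have "z ^\<^sub>J Suc n \<cdot> (z \<cdot> t) + z ^\<^sub>J Suc n \<cdot> (z \<cdot> t) + (z \<cdot> z) \<cdot> (z ^\<^sub>J n \<cdot> t)
      = z ^\<^sub>J Suc (Suc n) \<cdot> t + z ^\<^sub>J n \<cdot> (z \<cdot> (z \<cdot> t)) + z \<cdot> (z \<cdot> (z ^\<^sub>J n \<cdot> t))"
    by (simp add: mult_commute)
  then show ?thesis
    by (simp add: algebra_simps scaleR_2)
qed

lemma jpow_mult_commute:
  "z ^\<^sub>J n \<cdot> (z \<cdot> v) = z \<cdot> (z ^\<^sub>J n \<cdot> v) \<and> z ^\<^sub>J n \<cdot> ((z \<cdot> z) \<cdot> v) = (z \<cdot> z) \<cdot> (z ^\<^sub>J n \<cdot> v)"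
proof (induction n arbitrary: v rule: induct_nat_012)
  case 0
  show ?case by simp
next
  case 1
  show ?case by (simp add: jordan_identity)
next
  case (ge2 n)
  then show ?case
    unfolding jpow_Suc_Suc_mult by (simp add: jordan_identity)
qed

lemma jpow_add: "z ^\<^sub>J m \<cdot> z ^\<^sub>J n = z ^\<^sub>J (m + n)"
proof (induction n)
  case 0
  show ?case by simp
next
  case (Suc n)
  have "z ^\<^sub>J m \<cdot> z ^\<^sub>J Suc n = z \<cdot> (z ^\<^sub>J m \<cdot> z ^\<^sub>J n)"
    using jpow_mult_commute by simp
  then show ?case
    using Suc by simp
qed

lemma jpow_mem_power_span: "z ^\<^sub>J n \<in> power_span z"
  by (simp add: span_base)

lemma power_span_mult_closed: "x \<in> power_span z \<Longrightarrow> y \<in> power_span z \<Longrightarrow> x \<cdot> y \<in> power_span z"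
  by (erule mult_mem_span) (auto simp: jpow_add span_base)

lemma power_span_mult_assoc:
  "x \<in> power_span z \<Longrightarrow> y \<in> power_span z \<Longrightarrow> w \<in> power_span z \<Longrightarrow> (x \<cdot> y) \<cdot> w = x \<cdot> (y \<cdot> w)"
  by (erule mult_assoc_on_span) (auto simp: jpow_add add.assoc)

section \<open>Positivity and Thompson's metric on a Jordan frame\<close>

lemma lagrange_elem_mem_power_span:
  "x \<in> power_span z \<Longrightarrow> lagrange_elem jm u m ls x \<in> power_span z"
proof (induction ls)
  case Nil
  show ?case
    using jpow_mem_power_span[of z 0] by simp
next
  case (Cons l ls)
  then show ?case
    by (simp add: power_span_mult_closed span_diff span_scale)
qed

text \<open>If m < 0, then (e z)^2 + (sqrt(-m) e)^2 = 0, computed in the associative power span of z,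
  and formal reality forces e = 0.\<close>

lemma power_span_eigenvalue_of_square_nonneg:
  assumes "e \<in> power_span z" and "e \<cdot> e = e" and "e \<noteq> 0" and "e \<cdot> (z \<cdot> z) = m *\<^sub>R e"
  shows "0 \<le> m"
proof (rule ccontr)
  assume "\<not> 0 \<le> m"
  have z: "z \<in> power_span z"
    using jpow_mem_power_span[of z 1] by simp
  note assoc = power_span_mult_assoc and closed = power_span_mult_closed
  have "(e \<cdot> z) \<cdot> (e \<cdot> z) = e \<cdot> (z \<cdot> (z \<cdot> e))"
    using assoc[OF assms(1) z closed[OF assms(1) z]] mult_commute[of e z] by simp
  also have "z \<cdot> (z \<cdot> e) = e \<cdot> (z \<cdot> z)"
    using assoc[OF z z assms(1)] mult_commute[of "z \<cdot> z" e] by argo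
  also have "e \<cdot> (e \<cdot> (z \<cdot> z)) = (e \<cdot> e) \<cdot> (z \<cdot> z)"
    by (rule assoc[OF assms(1) assms(1) closed[OF z z], symmetric])
  finally have "(e \<cdot> z) \<cdot> (e \<cdot> z) = m *\<^sub>R e"
    using assms(2,4) by simp
  moreover have "(sqrt (- m) *\<^sub>R e) \<cdot> (sqrt (- m) *\<^sub>R e) = (- m) *\<^sub>R e"
    using \<open>\<not> 0 \<le> m\<close> assms(2) by simp
  ultimately have "(e \<cdot> z) \<cdot> (e \<cdot> z) + (sqrt (- m) *\<^sub>R e) \<cdot> (sqrt (- m) *\<^sub>R e) = 0"
    by simp
  then have "sqrt (- m) *\<^sub>R e = 0"
    by (rule square_add_square_eq_0D)
  then show False
    using \<open>\<not> 0 \<le> m\<close> assms(3) by simp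
qed

lemma square_decomposition_coeff_nonneg:
  assumes decomp: "idempotent_decomposition jm u n c" and nonzero: "\<forall>i<n. c i \<noteq> 0"
    and square: "z \<cdot> z = (\<Sum>i<n. d i *\<^sub>R c i)" and "j < n"
  shows "0 \<le> d j"
proof (rule power_span_eigenvalue_of_square_nonneg)
  define e where "e = (\<Sum>i<n. of_bool (d i = d j) *\<^sub>R c i)"
  define ls where "ls = sorted_list_of_set (d ` {..<n} - {d j})"
  have "lagrange_elem jm u (d j) ls (z \<cdot> z) = e"
    unfolding square e_def
    by (rule spectral_projection_eq_lagrange_elem[OF decomp]) (simp_all add: ls_def)
  moreover have "z \<cdot> z \<in> power_span z"
    using jpow_mem_power_span[of z 2] by (simp add: numeral_2_eq_2)
  ultimately show "e \<in> power_span z"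
    using lagrange_elem_mem_power_span by metis
  show "e \<cdot> e = e"
    unfolding e_def idempotent_decomposition_mult[OF decomp] by (intro sum.cong) auto
  show "e \<cdot> (z \<cdot> z) = d j *\<^sub>R e"
    unfolding e_def square idempotent_decomposition_mult[OF decomp] scaleR_sum_right
    by (intro sum.cong) auto
  have "c j \<cdot> e = c j"
    unfolding e_def idempotent_decomposition_mult_right[OF decomp \<open>j < n\<close>] by simp
  then show "e \<noteq> 0"
    using nonzero \<open>j < n\<close> by auto
qed

lemma jcone_jordan_frame_iff:
  assumes "jordan_frame jm u n c"
  shows "(\<Sum>i<n. r i *\<^sub>R c i) \<in> jcone jm \<longleftrightarrow> (\<forall>i<n. 0 \<le> r i)"
proof
  assume "(\<Sum>i<n. r i *\<^sub>R c i) \<in> jcone jm"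
  then obtain z where "z \<cdot> z = (\<Sum>i<n. r i *\<^sub>R c i)"
    by (auto simp: jcone_def jsq_def)
  then show "\<forall>i<n. 0 \<le> r i"
    using square_decomposition_coeff_nonneg[OF jordan_frame_imp_idempotent_decomposition[OF assms]]
      jordan_frame_nonzero[OF assms] by blast
next
  assume "\<forall>i<n. 0 \<le> r i"
  then have "jsq jm (\<Sum>i<n. sqrt (r i) *\<^sub>R c i) = (\<Sum>i<n. r i *\<^sub>R c i)"
    unfolding jsq_def idempotent_decomposition_mult[OF jordan_frame_imp_idempotent_decomposition[OF assms]]
    by (intro sum.cong) auto
  then show "(\<Sum>i<n. r i *\<^sub>R c i) \<in> jcone jm"
    unfolding jcone_def by (metis (mono_tags, lifting) mem_Collect_eq)
qed

lemma jle_jordan_frame_iff: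
  assumes "jordan_frame jm u n c"
  shows "jle jm (\<Sum>i<n. a i *\<^sub>R c i) (\<Sum>i<n. b i *\<^sub>R c i) \<longleftrightarrow> (\<forall>i<n. a i \<le> b i)"
proof -
  have "(\<Sum>i<n. b i *\<^sub>R c i) - (\<Sum>i<n. a i *\<^sub>R c i) = (\<Sum>i<n. (b i - a i) *\<^sub>R c i)"
    by (simp add: scaleR_diff_left sum_subtractf)
  then show ?thesis
    unfolding jle_def using jcone_jordan_frame_iff[OF assms] by simp
qed

lemma jordan_frame_length_pos: "jordan_frame jm u n c \<Longrightarrow> 0 < n"
  using unit_nonzero by (cases n) (auto simp: jordan_frame_def)

lemma Mfun_jordan_frame:
  assumes frame: "jordan_frame jm u n c" and pos: "\<forall>i<n. 0 < b i"
  shows "Mfun jm (\<Sum>i<n. a i *\<^sub>R c i) (\<Sum>i<n. b i *\<^sub>R c i) = Max ((\<lambda>i. a i / b i) ` {..<n})"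
proof -
  have "jle jm (\<Sum>i<n. a i *\<^sub>R c i) (\<beta> *\<^sub>R (\<Sum>i<n. b i *\<^sub>R c i))
      \<longleftrightarrow> (\<forall>i<n. a i / b i \<le> \<beta>)" for \<beta>
    using jle_jordan_frame_iff[OF frame, of a "\<lambda>i. \<beta> * b i"] pos
    by (simp add: scaleR_sum_right pos_divide_le_eq)
  also have "\<dots> \<beta> \<longleftrightarrow> \<beta> \<in> {Max ((\<lambda>i. a i / b i) ` {..<n})..}" for \<beta>
    using jordan_frame_length_pos[OF frame] by (auto simp: Max_le_iff lessThan_empty_iff)
  finally have "{\<beta>. jle jm (\<Sum>i<n. a i *\<^sub>R c i) (\<beta> *\<^sub>R (\<Sum>i<n. b i *\<^sub>R c i))}
      = {Max ((\<lambda>i. a i / b i) ` {..<n})..}"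
    by blast
  then show ?thesis
    unfolding Mfun_def by simp
qed

lemma dT_jexp_jordan_frame:
  assumes frame: "jordan_frame jm u n c"
  shows "dT jm (jexp jm u (\<Sum>i<n. a i *\<^sub>R c i)) (jexp jm u (\<Sum>i<n. b i *\<^sub>R c i))
       = Max ((\<lambda>i. \<bar>a i - b i\<bar>) ` {..<n})"
proof -
  have nonempty: "{..<n} \<noteq> {}"
    using jordan_frame_length_pos[OF frame] by auto
  have ln_Mfun: "ln (Mfun jm (\<Sum>i<n. exp (f i) *\<^sub>R c i) (\<Sum>i<n. exp (g i) *\<^sub>R c i))
      = Max ((\<lambda>i. f i - g i) ` {..<n})" for f g
  proof -
    have "mono (exp :: real \<Rightarrow> real)"
      by (rule monoI) simp
    then have "exp (Max ((\<lambda>i. f i - g i) ` {..<n})) = Max ((\<lambda>i. exp (f i) / exp (g i)) ` {..<n})"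
      using nonempty by (simp add: mono_Max_commute image_image exp_diff)
    then show ?thesis
      using Mfun_jordan_frame[OF frame, where a = "\<lambda>i. exp (f i)" and b = "\<lambda>i. exp (g i)"]
      by (metis exp_gt_zero ln_exp)
  qed
  show ?thesis
    unfolding dT_def jexp_jordan_frame[OF frame] ln_Mfun
    using Max_abs_eq_max_Max[OF _ nonempty, of "\<lambda>i. a i - b i"] by simp
qed

lemma dT_jexp_eq_unorm_on_frame_span:
  assumes frame: "jordan_frame jm u n c"
    and "x \<in> span (c ` {..<n})" and "y \<in> span (c ` {..<n})"
  shows "dT jm (jexp jm u x) (jexp jm u y) = unorm jm u (x - y)"
proof -
  obtain a b where "x = (\<Sum>i<n. a i *\<^sub>R c i)" and "y = (\<Sum>i<n. b i *\<^sub>R c i)"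
    using assms(2,3) span_image_lessThan by metis
  moreover have "(\<Sum>i<n. a i *\<^sub>R c i) - (\<Sum>i<n. b i *\<^sub>R c i) = (\<Sum>i<n. (a i - b i) *\<^sub>R c i)"
    by (simp add: scaleR_diff_left sum_subtractf)
  ultimately show ?thesis
    by (simp add: dT_jexp_jordan_frame[OF frame] unorm_jordan_frame[OF frame])
qed

lemma unorm_scaleR_on_frame_span:
  assumes frame: "jordan_frame jm u n c" and "x \<in> span (c ` {..<n})"
  shows "unorm jm u (r *\<^sub>R x) = \<bar>r\<bar> * unorm jm u x"
proof -
  obtain a where x: "x = (\<Sum>i<n. a i *\<^sub>R c i)"
    using assms(2) span_image_lessThan by metis
  have "mono (\<lambda>t. \<bar>r\<bar> * t)"
    by (rule monoI) (simp add: mult_left_mono)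
  then have "\<bar>r\<bar> * Max ((\<lambda>i. \<bar>a i\<bar>) ` {..<n}) = Max ((\<lambda>i. \<bar>r * a i\<bar>) ` {..<n})"
    using jordan_frame_length_pos[OF frame]
    by (subst mono_Max_commute) (auto simp: image_image abs_mult lessThan_empty_iff)
  then show ?thesis
    unfolding x scaleR_sum_right by (simp add: unorm_jordan_frame[OF frame])
qed

section \<open>Extension to a Jordan frame\<close>

lemma idempotent_decomposition_length_le_DIM:
  assumes decomp: "idempotent_decomposition jm q m e" and nonzero: "\<forall>i<m. e i \<noteq> 0"
  shows "m \<le> DIM('a)"
proof -
  have inj: "inj_on e {..<m}"
  proof (rule inj_onI)
    fix i j
    assume "i \<in> {..<m}" "j \<in> {..<m}" "e i = e j"
    then show "i = j"
      using decomp nonzero unfolding idempotent_decomposition_def idempotent_def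
      by (metis lessThan_iff)
  qed
  have "independent (e ` {..<m})"
  proof (rule independent_if_scalars_zero)
    fix f v
    assume sum: "(\<Sum>v\<in>e ` {..<m}. f v *\<^sub>R v) = 0" and "v \<in> e ` {..<m}"
    then obtain j where j: "j < m" "v = e j"
      by auto
    have "(\<Sum>i<m. f (e i) *\<^sub>R e i) = 0"
      using sum by (simp add: sum.reindex[OF inj])
    then have "f (e j) *\<^sub>R e j = 0"
      using idempotent_decomposition_mult_right[OF decomp j(1), of "\<lambda>i. f (e i)"] by simp
    then show "f v = 0"
      using nonzero j by simp
  qed simp
  then show ?thesis
    using independent_bound card_image[OF inj] by fastforce
qed

lemma idempotent_decomposition_split:
  assumes decomp: "idempotent_decomposition jm q m e" and "i < m"
    and a: "a \<cdot> a = a" and b: "b \<cdot> b = b" and ab: "a \<cdot> b = 0" and split: "e i = a + b"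
  shows "idempotent_decomposition jm q (Suc m) ((e(i := a))(m := b))"
proof -
  have ba: "b \<cdot> a = 0"
    using ab mult_commute by metis
  have ei: "e i \<cdot> e i = e i"
    using decomp \<open>i < m\<close> by (simp add: idempotent_decomposition_def idempotent_def)
  have "e i \<cdot> a = a" "e i \<cdot> b = b"
    using split a b ab ba by simp_all
  then have orth: "e j \<cdot> a = 0" "a \<cdot> e j = 0" "e j \<cdot> b = 0" "b \<cdot> e j = 0" if "j < m" "j \<noteq> i" for j
    using mult_orthogonal_idempotent_eq_0[OF ei, of "e j"] decomp that \<open>i < m\<close> mult_commute
    by (auto simp: idempotent_decomposition_def idempotent_def)
  define e' where "e' = (e(i := a))(m := b)"
  have "(\<Sum>j<m. e' j) = (\<Sum>j<m. e j) + (\<Sum>j<m. if j = i then a - e i else 0)"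
    unfolding sum.distrib[symmetric] by (intro sum.cong) (auto simp: e'_def)
  then have "(\<Sum>j<Suc m. e' j) = (\<Sum>j<m. e j)"
    using \<open>i < m\<close> split by (simp add: sum.delta e'_def)
  then show ?thesis
    using decomp a b ab ba orth unfolding e'_def[symmetric] idempotent_decomposition_def idempotent_def
    by (auto simp: e'_def less_Suc_eq)
qed

lemma primitive_idempotent_decomposition_exists:
  assumes "q \<cdot> q = q"
  obtains m e where "idempotent_decomposition jm q m e" and "\<forall>i<m. primitive_idem jm (e i)"
proof -
  define P where "P m \<longleftrightarrow> (\<exists>e. idempotent_decomposition jm q m e \<and> (\<forall>i<m. e i \<noteq> 0))" for m
  define M where "M = (GREATEST m. P m)"
  have "P (if q = 0 then 0 else 1)"
    using assms unfolding P_def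
    by (intro exI[of _ "\<lambda>_. q"]) (auto simp: idempotent_decomposition_def idempotent_def)
  moreover have "P m \<Longrightarrow> m \<le> DIM('a)" for m
    unfolding P_def using idempotent_decomposition_length_le_DIM by blast
  ultimately have "P M" and maximal: "\<And>m. P m \<Longrightarrow> m \<le> M"
    unfolding M_def by (blast intro: GreatestI_nat Greatest_le_nat)+
  then obtain e where decomp: "idempotent_decomposition jm q M e" and nonzero: "\<forall>i<M. e i \<noteq> 0"
    unfolding P_def by blast
  have "primitive_idem jm (e i)" if "i < M" for i
    unfolding primitive_idem_def
  proof (intro conjI)
    show "idempotent jm (e i)" and "e i \<noteq> 0"
      using decomp nonzero that by (auto simp: idempotent_decomposition_def)
    show "\<not> (\<exists>a b. idempotent jm a \<and> idempotent jm b \<and> a \<noteq> 0 \<and> b \<noteq> 0 \<and> a \<cdot> b = 0 \<and> e i = a + b)"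
    proof
      assume "\<exists>a b. idempotent jm a \<and> idempotent jm b \<and> a \<noteq> 0 \<and> b \<noteq> 0 \<and> a \<cdot> b = 0 \<and> e i = a + b"
      then obtain a b where "a \<cdot> a = a" "b \<cdot> b = b" "a \<noteq> 0" "b \<noteq> 0" "a \<cdot> b = 0" "e i = a + b"
        by (auto simp: idempotent_def)
      then have "P (Suc M)"
        unfolding P_def using idempotent_decomposition_split[OF decomp that] nonzero
        by (intro exI[of _ "(e(i := a))(M := b)"]) (auto simp: less_Suc_eq)
      then show False
        using maximal by fastforce
    qed
  qed
  then show thesis
    using that decomp by blast
qed

lemma idempotent_decomposition_append:
  assumes p: "idempotent_decomposition jm q k p" and e: "idempotent_decomposition jm r m e"
    and pe: "\<And>i j. i < k \<Longrightarrow> j < m \<Longrightarrow> p i \<cdot> e j = 0"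
  shows "idempotent_decomposition jm (q + r) (k + m) (\<lambda>i. if i < k then p i else e (i - k))"
proof -
  have ep: "e j \<cdot> p i = 0" if "i < k" "j < m" for i j
    using pe[OF that] mult_commute by metis
  have "(\<Sum>i<k + l. if i < k then p i else e (i - k)) = (\<Sum>i<k. p i) + (\<Sum>i<l. e i)" for l
    by (induction l) auto
  then show ?thesis
    using p e pe ep unfolding idempotent_decomposition_def
    by (auto simp: not_less)
qed

lemma jordan_frame_extension:
  assumes prim: "\<forall>i<k. primitive_idem jm (p i)" and orth: "\<forall>i<k. \<forall>j<k. i \<noteq> j \<longrightarrow> p i \<cdot> p j = 0"
  obtains n c where "k \<le> n" and "jordan_frame jm u n c" and "\<forall>i<k. c i = p i"
proof -
  have P: "idempotent_decomposition jm (\<Sum>i<k. p i) k p"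
    using prim orth by (simp add: idempotent_decomposition_def primitive_idem_def)
  define q where "q = u - (\<Sum>i<k. p i)"
  have pq: "p i \<cdot> q = 0" if "i < k" for i
    using idempotent_decomposition_mult_right[OF P that, of "\<lambda>_. 1"] by (simp add: q_def)
  then have "q \<cdot> (\<Sum>i<k. p i) = 0"
    by (simp add: mult_sum_right mult_commute[of q])
  then have q: "q \<cdot> q = q"
    by (subst (2) q_def) simp
  obtain m e where E: "idempotent_decomposition jm q m e" and prim_e: "\<forall>i<m. primitive_idem jm (e i)"
    using primitive_idempotent_decomposition_exists[OF q] by blast
  have "p i \<cdot> e j = 0" if "i < k" "j < m" for i j
  proof (rule mult_orthogonal_idempotent_eq_0[OF q])
    show "p i \<cdot> p i = p i"
      using P \<open>i < k\<close> by (simp add: idempotent_decomposition_def idempotent_def)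
    show "q \<cdot> p i = 0"
      using pq[OF \<open>i < k\<close>] mult_commute by metis
    show "q \<cdot> e j = e j"
      using idempotent_decomposition_mult_right[OF E \<open>j < m\<close>, of "\<lambda>_. 1"] E mult_commute
      by (simp add: idempotent_decomposition_def)
  qed
  from idempotent_decomposition_append[OF P E this]
  have "jordan_frame jm u (k + m) (\<lambda>i. if i < k then p i else e (i - k))"
    using prim prim_e by (simp add: jordan_frame_iff q_def)
  then show thesis
    by (rule that[rotated]) auto
qed

end

theorem lemma3p1:
  fixes jm :: "'a::euclidean_space \<Rightarrow> 'a \<Rightarrow> 'a" and u :: 'a
    and p :: "nat \<Rightarrow> 'a" and k :: nat
  assumes "EJA jm u"
    and "\<forall>i<k. primitive_idem jm (p i)"
    and "\<forall>i<k. \<forall>j<k. i \<noteq> j \<longrightarrow> jm (p i) (p j) = 0"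
  shows "(\<forall>x\<in>span (p ` {..<k}). \<forall>y\<in>span (p ` {..<k}).
            dT jm (jexp jm u x) (jexp jm u y) = unorm jm u (x - y))
       \<and> (\<forall>x\<in>span (p ` {..<k}). \<forall>w\<in>span (p ` {..<k}). unorm jm u w = 1 \<longrightarrow>
            (\<forall>s t::real. dT jm (jexp jm u (t *\<^sub>R w + x)) (jexp jm u (s *\<^sub>R w + x)) = \<bar>t - s\<bar>))"
proof -
  interpret eja jm u
    by (rule eja.intro) (rule assms(1))
  obtain n c where "k \<le> n" and frame: "jordan_frame jm u n c" and "\<forall>i<k. c i = p i"
    using jordan_frame_extension[OF assms(2,3)] .
  then have "p ` {..<k} \<subseteq> c ` {..<n}"
    by (metis image_cong image_mono lessThan_iff lessThan_subset_iff)
  then have "span (p ` {..<k}) \<subseteq> span (c ` {..<n})"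
    by (rule span_mono)
  note on_span = subsetD[OF this]
  show ?thesis
  proof (intro conjI ballI allI impI)
    fix x y
    assume "x \<in> span (p ` {..<k})" and "y \<in> span (p ` {..<k})"
    then show "dT jm (jexp jm u x) (jexp jm u y) = unorm jm u (x - y)"
      by (intro dT_jexp_eq_unorm_on_frame_span[OF frame] on_span)
  next
    fix x w s t
    assume x: "x \<in> span (p ` {..<k})" and w: "w \<in> span (p ` {..<k})" and "unorm jm u w = 1"
    have "t *\<^sub>R w + x - (s *\<^sub>R w + x) = (t - s) *\<^sub>R w"
      by (simp add: algebra_simps)
    then show "dT jm (jexp jm u (t *\<^sub>R w + x)) (jexp jm u (s *\<^sub>R w + x)) = \<bar>t - s\<bar>"
      using dT_jexp_eq_unorm_on_frame_span[OF frame, of "t *\<^sub>R w + x" "s *\<^sub>R w + x"]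
        unorm_scaleR_on_frame_span[OF frame on_span[OF w], of "t - s"] \<open>unorm jm u w = 1\<close>
        on_span x w
      by (simp add: span_add span_scale)
  qed
qed

end
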